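(* Let $\alpha\neq 0$ be real. Let $S$ be a spacelike surface in $\mathbb L^3$ invariant under the rotations about the $x$-axis, parametrized by $X(x,\theta)=(x,u(x)\sinh\theta,u(x)\cosh\theta)$, $x\in I$, $\theta\in\mathbb R$, with $u>0$. If $S$ is an $\alpha$-singular maximal surface, then its generating curve $z=u(x)$ in the plane $y=0$ (identified with $\mathbb L^2$) satisfies the one-dimensional $(\alpha-1)$-singular maximal equation $$\frac{u''}{1-u'^2}=\frac{\alpha-1}{u}.$$ Conversely, if $u>0$ with $u'^2<1$ satisfies $\frac{u''}{1-u'^2}=\frac{\alpha}{u}$, then the surface $X(x,\theta)=(x,u(x)\sinh\theta,u(x)\cosh\theta)$ is an $(\alpha+1)$-singular maximal surface invariant by all rotations about the $x$-axis.
   Context: $\mathbb L^3$ is $\mathbb R^3$ with the metric $dx^2+dy^2-dz^2$. A spacelike surface has Riemannian induced metric and timelike unit normal $N$; $H$ is the trace of its second fundamental form. For $\beta\in\mathbb R$, a $\beta$-singular maximal surface is a spacelike surface in the halfspace $z>0$ with $H(p)=-\beta\frac{\langle N(p),\vec a\rangle}{z}$ for all $p$, where $\vec a=(0,0,1)$ and $N$ is a unit normal field. *)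

theory Defs
  imports "HOL-Analysis.Analysis"
begin

definition linner :: "real^3 \<Rightarrow> real^3 \<Rightarrow> real" where
  "linner a b = a$1 * b$1 + a$2 * b$2 - a$3 * b$3"

definition avec :: "real^3" where
  "avec = vector [0, 0, 1]"

definition Xs :: "(real \<Rightarrow> real \<Rightarrow> real^3) \<Rightarrow> real \<Rightarrow> real \<Rightarrow> real^3" where
  "Xs X s t = vector_derivative (\<lambda>r. X r t) (at s)"
definition Xt :: "(real \<Rightarrow> real \<Rightarrow> real^3) \<Rightarrow> real \<Rightarrow> real \<Rightarrow> real^3" where
  "Xt X s t = vector_derivative (\<lambda>r. X s r) (at t)"
definition Xss :: "(real \<Rightarrow> real \<Rightarrow> real^3) \<Rightarrow> real \<Rightarrow> real \<Rightarrow> real^3" where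
  "Xss X s t = vector_derivative (\<lambda>r. Xs X r t) (at s)"
definition Xst :: "(real \<Rightarrow> real \<Rightarrow> real^3) \<Rightarrow> real \<Rightarrow> real \<Rightarrow> real^3" where
  "Xst X s t = vector_derivative (\<lambda>r. Xs X s r) (at t)"
definition Xtt :: "(real \<Rightarrow> real \<Rightarrow> real^3) \<Rightarrow> real \<Rightarrow> real \<Rightarrow> real^3" where
  "Xtt X s t = vector_derivative (\<lambda>r. Xt X s r) (at t)"

definition EE where "EE X s t = linner (Xs X s t) (Xs X s t)"
definition FF where "FF X s t = linner (Xs X s t) (Xt X s t)"
definition GG where "GG X s t = linner (Xt X s t) (Xt X s t)"

definition spacelike_surface :: "(real \<Rightarrow> real \<Rightarrow> real^3) \<Rightarrow> (real \<times> real) set \<Rightarrow> bool" where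
  "spacelike_surface X U \<longleftrightarrow> open U \<and>
     (\<forall>(s,t)\<in>U.
        (\<lambda>r. X r t) differentiable (at s) \<and> (\<lambda>r. X s r) differentiable (at t) \<and>
        (\<lambda>r. Xs X r t) differentiable (at s) \<and> (\<lambda>r. Xs X s r) differentiable (at t) \<and>
        (\<lambda>r. Xt X s r) differentiable (at t) \<and>
        EE X s t > 0 \<and> EE X s t * GG X s t - (FF X s t)^2 > 0)"

definition unit_normal :: "(real \<Rightarrow> real \<Rightarrow> real^3) \<Rightarrow> real^3 \<Rightarrow> real \<Rightarrow> real \<Rightarrow> bool" where
  "unit_normal X N s t \<longleftrightarrow>
     linner N (Xs X s t) = 0 \<and> linner N (Xt X s t) = 0 \<and> linner N N = -1"

text \<open>Mean curvature H = trace of the second fundamental form, w.r.t. the unit normal N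
  (the vector-valued trace sigma equals H N; since the normal bundle projection is
  v \<mapsto> - <v,N> N, this gives H = - g^{ij} <X_ij, N>).\<close>
definition mean_curv :: "(real \<Rightarrow> real \<Rightarrow> real^3) \<Rightarrow> real^3 \<Rightarrow> real \<Rightarrow> real \<Rightarrow> real" where
  "mean_curv X N s t =
     - (linner (Xss X s t) N * GG X s t - 2 * linner (Xst X s t) N * FF X s t
        + linner (Xtt X s t) N * EE X s t)
       / (EE X s t * GG X s t - (FF X s t)^2)"

definition singular_maximal :: "real \<Rightarrow> (real \<Rightarrow> real \<Rightarrow> real^3) \<Rightarrow> (real \<times> real) set \<Rightarrow> bool" where
  "singular_maximal \<beta> X U \<longleftrightarrow> spacelike_surface X U \<and>
     (\<forall>(s,t)\<in>U. X s t $ 3 > 0) \<and>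
     (\<exists>N :: real \<times> real \<Rightarrow> real^3. continuous_on U N \<and>
        (\<forall>(s,t)\<in>U. unit_normal X (N (s,t)) s t \<and>
           mean_curv X (N (s,t)) s t = - \<beta> * linner (N (s,t)) avec / (X s t $ 3)))"

definition rot_surface :: "(real \<Rightarrow> real) \<Rightarrow> real \<Rightarrow> real \<Rightarrow> real^3" where
  "rot_surface u x \<theta> = vector [x, u x * sinh \<theta>, u x * cosh \<theta>]"

definition xrot :: "real \<Rightarrow> real^3 \<Rightarrow> real^3" where
  "xrot \<phi> p = vector [p$1, p$2 * cosh \<phi> + p$3 * sinh \<phi>, p$2 * sinh \<phi> + p$3 * cosh \<phi>]"

end

theory Submission
  imports Defs
begin

text \<open>The meridian directions of the surface are spanned by the radial vector
  \<open>\<rho>(\<theta>) = (0, sinh \<theta>, cosh \<theta>)\<close>: one has \<open>X\<^sub>x\<^sub>x = u'' \<rho>\<close>, \<open>X\<^sub>\<theta>\<^sub>\<theta> = u \<rho>\<close>, and tangency to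
  \<open>X\<^sub>\<theta>\<close> forces a normal \<open>n\<close> to satisfy \<open>n\<^sub>3 = - cosh \<theta> \<langle>n, \<rho>\<rangle>\<close>. Hence both sides of the
  \<open>\<beta>\<close>-singular maximal equation are multiples of \<open>\<langle>n, \<rho>\<rangle> \<noteq> 0\<close>, and the equation reduces
  to \<open>u u'' + (1 - u'\<^sup>2) = \<beta> (1 - u'\<^sup>2)\<close>, the one-dimensional \<open>(\<beta> - 1)\<close>-singular equation.
  The boosts about the x-axis act on the surface by translating \<open>\<theta>\<close>.\<close>

lemma vector3_eq_scaleR_sum:
  "(vector [a, b, c] :: real^3) =
     a *\<^sub>R axis 1 1 + b *\<^sub>R axis 2 1 + c *\<^sub>R axis 3 1"
  by (simp add: vec_eq_iff forall_3 vector_3 axis_def)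

lemma vector3_has_vector_derivative:
  assumes "(f has_real_derivative f') (at x)" "(g has_real_derivative g') (at x)"
    "(h has_real_derivative h') (at x)"
  shows "((\<lambda>r. vector [f r, g r, h r] :: real^3) has_vector_derivative vector [f', g', h']) (at x)"
  unfolding vector3_eq_scaleR_sum by (rule derivative_eq_intros assms | simp)+

lemma linner_vector3: "linner (vector [a, b, c]) (vector [d, e, f]) = a * d + b * e - c * f"
  by (simp add: linner_def)

lemma linner_scaleR_left: "linner (c *\<^sub>R a) b = c * linner a b"
  by (simp add: linner_def algebra_simps)

lemma linner_scaleR_right: "linner a (c *\<^sub>R b) = c * linner a b"
  by (simp add: linner_def algebra_simps)

lemma linner_avec: "linner n avec = - n$3"
  by (simp add: linner_def avec_def)

lemma cosh_sq_eq: "cosh t * cosh t = 1 + sinh t * (sinh t :: real)"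
  using cosh_square_eq[of t] by (simp add: power2_eq_square)

lemma cosh_mult_cosh_mult: "cosh t * (cosh t * x) = x + sinh t * (sinh t * (x :: real))"
  using cosh_square_eq[of t] by (simp add: power2_eq_square algebra_simps)

lemma xrot_rot_surface: "xrot \<phi> (rot_surface u x \<theta>) = rot_surface u x (\<theta> + \<phi>)"
  by (simp add: xrot_def rot_surface_def sinh_add cosh_add algebra_simps)

lemma xrot_image_rot_surface:
  "xrot \<phi> ` ((\<lambda>(x, \<theta>). rot_surface u x \<theta>) ` (I \<times> UNIV))
     = (\<lambda>(x, \<theta>). rot_surface u x \<theta>) ` (I \<times> UNIV)"
proof -
  have "xrot \<phi> ` ((\<lambda>(x, \<theta>). rot_surface u x \<theta>) ` (I \<times> UNIV))
      = (\<lambda>(x, \<theta>). rot_surface u x \<theta>) ` ((\<lambda>(x, \<theta>). (x, \<theta> + \<phi>)) ` (I \<times> UNIV))"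
    by (simp add: image_image case_prod_beta xrot_rot_surface)
  also have "(\<lambda>(x, \<theta>). (x, \<theta> + \<phi>)) ` (I \<times> UNIV) = I \<times> (UNIV :: real set)"
    by (auto simp: image_iff) (metis diff_add_cancel)
  finally show ?thesis .
qed

locale rotational_surface =
  fixes u u' u'' :: "real \<Rightarrow> real" and I :: "real set"
  assumes open_I: "open I"
    and has_derivative_u: "\<And>x. x \<in> I \<Longrightarrow> (u has_real_derivative u' x) (at x)"
    and has_derivative_u': "\<And>x. x \<in> I \<Longrightarrow> (u' has_real_derivative u'' x) (at x)"
begin

abbreviation "R \<equiv> rot_surface u"

lemma has_vector_derivative_Xs:
  "s \<in> I \<Longrightarrow> ((\<lambda>r. R r t) has_vector_derivative vector [1, u' s * sinh t, u' s * cosh t]) (at s)"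
  unfolding rot_surface_def
  by (rule vector3_has_vector_derivative) (auto intro!: derivative_eq_intros has_derivative_u)

lemma Xs_eq: "s \<in> I \<Longrightarrow> Xs R s t = vector [1, u' s * sinh t, u' s * cosh t]"
  unfolding Xs_def by (rule vector_derivative_at[OF has_vector_derivative_Xs])

lemma has_vector_derivative_Xt:
  "((\<lambda>r. R s r) has_vector_derivative vector [0, u s * cosh t, u s * sinh t]) (at t)"
  unfolding rot_surface_def
  by (rule vector3_has_vector_derivative) (auto intro!: derivative_eq_intros)

lemma Xt_eq: "Xt R s t = vector [0, u s * cosh t, u s * sinh t]"
  unfolding Xt_def by (rule vector_derivative_at[OF has_vector_derivative_Xt])

lemma has_vector_derivative_Xss:
  assumes "s \<in> I"
  shows "((\<lambda>r. Xs R r t) has_vector_derivative vector [0, u'' s * sinh t, u'' s * cosh t]) (at s)"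
proof (rule has_vector_derivative_transform_within_open[OF _ open_I assms])
  show "((\<lambda>r. vector [1, u' r * sinh t, u' r * cosh t] :: real^3) has_vector_derivative
      vector [0, u'' s * sinh t, u'' s * cosh t]) (at s)"
    by (rule vector3_has_vector_derivative)
      (auto intro!: derivative_eq_intros has_derivative_u' assms)
qed (simp add: Xs_eq)

lemma Xss_eq: "s \<in> I \<Longrightarrow> Xss R s t = vector [0, u'' s * sinh t, u'' s * cosh t]"
  unfolding Xss_def by (rule vector_derivative_at[OF has_vector_derivative_Xss])

lemma has_vector_derivative_Xst:
  "s \<in> I \<Longrightarrow> ((\<lambda>r. Xs R s r) has_vector_derivative vector [0, u' s * cosh t, u' s * sinh t]) (at t)"
  unfolding Xs_eq
  by (rule vector3_has_vector_derivative) (auto intro!: derivative_eq_intros)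

lemma Xst_eq: "s \<in> I \<Longrightarrow> Xst R s t = vector [0, u' s * cosh t, u' s * sinh t]"
  unfolding Xst_def by (rule vector_derivative_at[OF has_vector_derivative_Xst])

lemma has_vector_derivative_Xtt:
  "((\<lambda>r. Xt R s r) has_vector_derivative vector [0, u s * sinh t, u s * cosh t]) (at t)"
  unfolding Xt_eq
  by (rule vector3_has_vector_derivative) (auto intro!: derivative_eq_intros)

lemma Xtt_eq: "Xtt R s t = vector [0, u s * sinh t, u s * cosh t]"
  unfolding Xtt_def by (rule vector_derivative_at[OF has_vector_derivative_Xtt])

lemma EE_eq: "s \<in> I \<Longrightarrow> EE R s t = 1 - (u' s)^2"
  unfolding EE_def Xs_eq linner_vector3
  by (simp add: algebra_simps power2_eq_square cosh_mult_cosh_mult)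

lemma FF_eq: "s \<in> I \<Longrightarrow> FF R s t = 0"
  unfolding FF_def Xs_eq Xt_eq linner_vector3 by (simp add: algebra_simps)

lemma GG_eq: "GG R s t = (u s)^2"
  unfolding GG_def Xt_eq linner_vector3
  by (simp add: algebra_simps power2_eq_square cosh_mult_cosh_mult)

lemma spacelike_surface_rot:
  assumes "\<And>x. x \<in> I \<Longrightarrow> u x \<noteq> 0 \<and> (u' x)^2 < 1"
  shows "spacelike_surface R (I \<times> UNIV)"
  unfolding spacelike_surface_def
proof (intro conjI ballI)
  show "open (I \<times> (UNIV :: real set))"
    using open_I by (simp add: open_Times)
next
  fix p assume "p \<in> I \<times> (UNIV :: real set)"
  then obtain s t where p: "p = (s, t)" and s: "s \<in> I" by auto
  show "case p of (s, t) \<Rightarrow>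
     (\<lambda>r. R r t) differentiable at s \<and> (\<lambda>r. R s r) differentiable at t \<and>
     (\<lambda>r. Xs R r t) differentiable at s \<and> (\<lambda>r. Xs R s r) differentiable at t \<and>
     (\<lambda>r. Xt R s r) differentiable at t \<and> 0 < EE R s t \<and> 0 < EE R s t * GG R s t - (FF R s t)\<^sup>2"
    unfolding p
    using differentiableI_vector[OF has_vector_derivative_Xs[OF s]]
      differentiableI_vector[OF has_vector_derivative_Xt]
      differentiableI_vector[OF has_vector_derivative_Xss[OF s]]
      differentiableI_vector[OF has_vector_derivative_Xst[OF s]]
      differentiableI_vector[OF has_vector_derivative_Xtt] assms[OF s]
    by (simp add: EE_eq[OF s] FF_eq[OF s] GG_eq)
qed

lemma mean_curv_eq:
  assumes "s \<in> I"
  shows "mean_curv R n s t = - linner n (vector [0, sinh t, cosh t])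
           * (u'' s * u s + (1 - (u' s)^2)) / ((1 - (u' s)^2) * u s)"
proof (cases "u s = 0")
  case False
  define \<nu> where "\<nu> = linner n (vector [0, sinh t, cosh t])"
  have "mean_curv R n s t = (- \<nu> * (u'' s * u s + (1 - (u' s)^2)) * u s) / ((1 - (u' s)^2) * u s * u s)"
    unfolding mean_curv_def Xss_eq[OF assms] Xtt_eq EE_eq[OF assms] FF_eq[OF assms] GG_eq \<nu>_def
    by (simp add: linner_def algebra_simps power2_eq_square)
  also have "\<dots> = - \<nu> * (u'' s * u s + (1 - (u' s)^2)) / ((1 - (u' s)^2) * u s)"
    using False by (rule nonzero_mult_divide_mult_cancel_right)
  finally show ?thesis
    unfolding \<nu>_def .
qed (simp add: mean_curv_def GG_eq FF_eq[OF assms])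

lemma normal_third_coordinate:
  assumes "linner n (Xt R s t) = 0" "u s \<noteq> 0"
  shows "n$3 = - cosh t * linner n (vector [0, sinh t, cosh t])"
proof -
  have tangent: "n$2 * cosh t = n$3 * sinh t"
    using assms unfolding Xt_eq by (simp add: linner_def algebra_simps)
  have "cosh t * linner n (vector [0, sinh t, cosh t]) = sinh t * (n$2 * cosh t) - n$3 * (cosh t * cosh t)"
    by (simp add: linner_def algebra_simps)
  also have "\<dots> = - n$3"
    unfolding tangent cosh_sq_eq by (simp add: algebra_simps)
  finally show ?thesis
    by simp
qed

lemma unit_normal_radial_nonzero:
  assumes "s \<in> I" "u s \<noteq> 0" "unit_normal R n s t"
  shows "linner n (vector [0, sinh t, cosh t]) \<noteq> 0"
proof
  assume radial: "linner n (vector [0, sinh t, cosh t]) = 0"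
  have tangent: "linner n (Xs R s t) = 0" "linner n (Xt R s t) = 0" and norm: "linner n n = -1"
    using assms(3) unfolding unit_normal_def by (auto simp: linner_def mult.commute)
  have "n$3 = 0"
    using normal_third_coordinate[OF tangent(2) assms(2)] radial by simp
  moreover have "n$2 = 0"
    using tangent(2) assms(2) \<open>n$3 = 0\<close> unfolding Xt_eq by (simp add: linner_def)
  moreover have "n$1 = 0"
    using tangent(1) \<open>n$2 = 0\<close> \<open>n$3 = 0\<close> unfolding Xs_eq[OF assms(1)] by (simp add: linner_def)
  ultimately show False
    using norm by (simp add: linner_def)
qed

lemma singular_maximal_equation_iff:
  assumes s: "s \<in> I" and pos: "u s > 0" and spacelike: "(u' s)^2 < 1"
    and normal: "unit_normal R n s t"
  shows "mean_curv R n s t = - \<beta> * linner n avec / (R s t $ 3)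
    \<longleftrightarrow> u'' s / (1 - (u' s)^2) = (\<beta> - 1) / u s"
proof -
  define \<nu> where "\<nu> = linner n (vector [0, sinh t, cosh t])"
  have \<nu>: "\<nu> \<noteq> 0"
    unfolding \<nu>_def using unit_normal_radial_nonzero[OF s _ normal] pos by simp
  have "n$3 = - cosh t * \<nu>"
    unfolding \<nu>_def using normal pos by (intro normal_third_coordinate) (auto simp: unit_normal_def)
  then have rhs: "- \<beta> * linner n avec / (R s t $ 3) = - \<beta> * \<nu> / u s"
    using pos by (simp add: linner_avec rot_surface_def)
  define E where "E = 1 - (u' s)^2"
  have E: "E > 0" using spacelike by (simp add: E_def)
  have "mean_curv R n s t = - \<beta> * linner n avec / (R s t $ 3)
      \<longleftrightarrow> - \<nu> * (u'' s * u s + E) / (E * u s) = - \<nu> * (\<beta> * E) / (E * u s)"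
    unfolding mean_curv_eq[OF s] rhs \<nu>_def[symmetric] E_def[symmetric] using E by (simp add: ac_simps)
  also have "\<dots> \<longleftrightarrow> u'' s * u s + E = \<beta> * E"
    unfolding divide_cancel_right using E pos \<nu> by simp
  also have "\<dots> \<longleftrightarrow> u'' s / E = (\<beta> - 1) / u s"
    using E pos by (auto simp: field_simps)
  finally show ?thesis
    unfolding E_def .
qed

definition rot_normal :: "real \<times> real \<Rightarrow> real^3" where
  "rot_normal = (\<lambda>(s, t). (1 / sqrt (1 - (u' s)^2)) *\<^sub>R vector [u' s, sinh t, cosh t])"

lemma unit_normal_rot_normal:
  assumes s: "s \<in> I" and spacelike: "(u' s)^2 < 1"
  shows "unit_normal R (rot_normal (s, t)) s t"
proof -
  define c where "c = 1 / sqrt (1 - (u' s)^2)"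
  define v :: "real^3" where "v = vector [u' s, sinh t, cosh t]"
  have "1 - (u' s)^2 > 0"
    using spacelike by simp
  then have "c * c * (1 - (u' s)^2) = 1"
    by (simp add: c_def power_divide flip: power2_eq_square)
  then have c: "c * (c * ((u' s)^2 - 1)) = -1"
    by (simp add: algebra_simps)
  have "linner v (Xs R s t) = 0" "linner v (Xt R s t) = 0" "linner v v = - (1 - (u' s)^2)"
    unfolding v_def Xs_eq[OF s] Xt_eq linner_vector3
    by (simp_all add: algebra_simps power2_eq_square cosh_mult_cosh_mult cosh_sq_eq)
  then show ?thesis
    using c unfolding unit_normal_def rot_normal_def prod.case c_def[symmetric] v_def[symmetric]
    by (simp add: linner_scaleR_left linner_scaleR_right)
qed

lemma continuous_on_rot_normal:
  assumes "\<And>x. x \<in> I \<Longrightarrow> (u' x)^2 < 1"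
  shows "continuous_on (I \<times> UNIV) rot_normal"
proof -
  have "continuous_on I u'"
    using has_derivative_u' by (meson DERIV_isCont continuous_at_imp_continuous_on)
  then have u': "continuous_on (I \<times> UNIV) (\<lambda>p. u' (fst p))"
    by (rule continuous_on_compose2) (auto intro: continuous_intros)
  have w: "\<forall>p\<in>I \<times> (UNIV :: real set). sqrt (1 - (u' (fst p))^2) \<noteq> 0"
  proof
    fix p
    assume "p \<in> I \<times> UNIV"
    then have "(u' (fst p))^2 < 1"
      using assms by auto
    then show "sqrt (1 - (u' (fst p))^2) \<noteq> 0"
      by simp
  qed
  show ?thesis
    unfolding rot_normal_def case_prod_beta vector3_eq_scaleR_sum
    by (intro continuous_intros u' w)
qed

lemma singular_maximal_rot_imp_ode:
  assumes "singular_maximal \<beta> R (I \<times> UNIV)" "x \<in> I" "u x > 0"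
  shows "u'' x / (1 - (u' x)^2) = (\<beta> - 1) / u x"
proof -
  obtain N where "spacelike_surface R (I \<times> UNIV)"
    and N: "\<forall>(s, t)\<in>I \<times> UNIV. unit_normal R (N (s, t)) s t \<and>
             mean_curv R (N (s, t)) s t = - \<beta> * linner (N (s, t)) avec / (R s t $ 3)"
    using assms(1) unfolding singular_maximal_def by blast
  then have "EE R x 0 > 0"
    using assms(2) by (auto simp: spacelike_surface_def)
  then have spacelike: "(u' x)^2 < 1"
    using EE_eq[OF assms(2)] by simp
  have "unit_normal R (N (x, 0)) x 0"
    and "mean_curv R (N (x, 0)) x 0 = - \<beta> * linner (N (x, 0)) avec / (R x 0 $ 3)"
    using N assms(2) by auto
  then show ?thesis
    using singular_maximal_equation_iff[OF assms(2,3) spacelike] by blast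
qed

lemma singular_maximal_rotI:
  assumes "\<And>x. x \<in> I \<Longrightarrow> u x > 0 \<and> (u' x)^2 < 1 \<and> u'' x / (1 - (u' x)^2) = (\<beta> - 1) / u x"
  shows "singular_maximal \<beta> R (I \<times> UNIV)"
  unfolding singular_maximal_def
proof (intro conjI exI[of _ rot_normal])
  show "spacelike_surface R (I \<times> UNIV)"
    using assms by (intro spacelike_surface_rot) force
  show "continuous_on (I \<times> UNIV) rot_normal"
    using assms by (intro continuous_on_rot_normal) blast
  show "\<forall>(s, t)\<in>I \<times> UNIV. R s t $ 3 > 0"
    using assms by (auto simp: rot_surface_def)
  show "\<forall>(s, t)\<in>I \<times> UNIV. unit_normal R (rot_normal (s, t)) s t \<and>
      mean_curv R (rot_normal (s, t)) s t = - \<beta> * linner (rot_normal (s, t)) avec / (R s t $ 3)"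
    using assms unit_normal_rot_normal singular_maximal_equation_iff by auto
qed

end

theorem proposition2p4:
  fixes u u' u'' :: "real \<Rightarrow> real" and I :: "real set" and \<alpha> :: real
  assumes "\<alpha> \<noteq> 0"
    and "open I" and "is_interval I"
    and "\<forall>x\<in>I. u x > 0"
    and "\<forall>x\<in>I. (u has_real_derivative u' x) (at x)"
    and "\<forall>x\<in>I. (u' has_real_derivative u'' x) (at x)"
  shows "(singular_maximal \<alpha> (rot_surface u) (I \<times> UNIV) \<longrightarrow>
            (\<forall>x\<in>I. u'' x / (1 - (u' x)^2) = (\<alpha> - 1) / u x))
       \<and> ((\<forall>x\<in>I. (u' x)^2 < 1 \<and> u'' x / (1 - (u' x)^2) = \<alpha> / u x) \<longrightarrow>
            singular_maximal (\<alpha> + 1) (rot_surface u) (I \<times> UNIV) \<and>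
            (\<forall>\<phi>. xrot \<phi> ` ((\<lambda>(x,\<theta>). rot_surface u x \<theta>) ` (I \<times> UNIV))
                  = (\<lambda>(x,\<theta>). rot_surface u x \<theta>) ` (I \<times> UNIV)))"
proof -
  interpret rotational_surface u u' u'' I
    using assms by unfold_locales auto
  show ?thesis
    using assms(4) singular_maximal_rot_imp_ode singular_maximal_rotI[of "\<alpha> + 1"]
      xrot_image_rot_surface
    by auto
qed

end
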